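(* Let $I$ be a finite set, $n\in\{1,\dots,|I|\}$, and $\bar J_n$ a set of $n$-element subsets of $I$. Samples are bit strings $o=(o_i)_{i\in I}\in\{0,1\}^I$; a set $j\in\bar J_n$ is activated by $o$ if $o_i=1$ for all $i\in j$. For $F\subset\bar J_n$ let $\mathbb 1_F:\{0,1\}^I\to\{0,1\}$ be given by $\mathbb 1_F(o)=1$ iff some $j\in F$ is activated by $o$, and let $\mathcal H:=\{\mathbb 1_F: F\subset\bar J_n\}$. Then the Vapnik–Chervonenkis dimension of $\mathcal H$ is $\operatorname{VCdim}(\mathcal H)=|\bar J_n|$.
   Context: The VC-dimension of a class of $\{0,1\}$-valued functions is the largest cardinality of a set of points on which the class realizes all possible labelings (that it shatters). *)

theory Defs
  imports Main
begin

definition shatters :: "('x \<Rightarrow> bool) set \<Rightarrow> 'x set \<Rightarrow> bool" where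
  "shatters H S \<longleftrightarrow> (\<forall>T \<subseteq> S. \<exists>h \<in> H. \<forall>x \<in> S. h x \<longleftrightarrow> x \<in> T)"

text \<open>VC dimension: largest cardinality of a finite subset of the domain X
shattered by H (the domain considered below is finite, so the maximum exists).\<close>
definition VCdim :: "'x set \<Rightarrow> ('x \<Rightarrow> bool) set \<Rightarrow> nat" where
  "VCdim X H = Max {card S | S. S \<subseteq> X \<and> finite S \<and> shatters H S}"

text \<open>Samples: bit strings indexed by I, i.e. functions I -> bool, made
extensional (value False outside I).\<close>
definition samples :: "'a set \<Rightarrow> ('a \<Rightarrow> bool) set" where
  "samples I = {s. \<forall>i. i \<notin> I \<longrightarrow> \<not> s i}"

definition activated :: "('a \<Rightarrow> bool) \<Rightarrow> 'a set \<Rightarrow> bool" where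
  "activated s j \<longleftrightarrow> (\<forall>i \<in> j. s i)"

definition indic :: "'a set set \<Rightarrow> ('a \<Rightarrow> bool) \<Rightarrow> bool" where
  "indic F s \<longleftrightarrow> (\<exists>j \<in> F. activated s j)"

definition hclass :: "'a set set \<Rightarrow> (('a \<Rightarrow> bool) \<Rightarrow> bool) set" where
  "hclass J = {indic F | F. F \<subseteq> J}"

end

theory Submission
  imports Defs
begin

text \<open>A class realising all labellings of a finite set S has at least \<open>2 ^ card S\<close> members, and
  \<open>hclass J\<close> has at most \<open>2 ^ card J\<close>, so no shattered set is larger than J. Conversely, the
  characteristic functions of the members of J form a shattered set of size \<open>card J\<close>: since
  sets of equal size form an antichain, the sample \<open>\<lambda>i. i \<in> j\<close> activates j and no other
  member of J, so \<open>indic F\<close> picks out exactly the samples of the sets in F.\<close>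

lemma shatters_imp_two_power_card_le:
  assumes "finite H" and "finite S" and "shatters H S"
  shows "2 ^ card S \<le> card H"
proof -
  have "Pow S \<subseteq> (\<lambda>h. {x \<in> S. h x}) ` H"
  proof
    fix T assume "T \<in> Pow S"
    then obtain h where "h \<in> H" and "\<forall>x \<in> S. h x \<longleftrightarrow> x \<in> T"
      using assms(3) unfolding shatters_def by blast
    with \<open>T \<in> Pow S\<close> have "T = {x \<in> S. h x}" by blast
    with \<open>h \<in> H\<close> show "T \<in> (\<lambda>h. {x \<in> S. h x}) ` H" by blast
  qed
  then have "card (Pow S) \<le> card H"
    by (meson assms(1) card_image_le card_mono finite_imageI order_trans)
  then show ?thesis
    using assms(2) by (simp add: card_Pow)
qed

lemma hclass_eq_image_Pow: "hclass J = indic ` Pow J"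
  unfolding hclass_def by auto

lemma finite_hclass: "finite J \<Longrightarrow> finite (hclass J)"
  by (simp add: hclass_eq_image_Pow)

lemma card_hclass_le: "finite J \<Longrightarrow> card (hclass J) \<le> 2 ^ card J"
  by (metis card_Pow card_image_le finite_Pow_iff hclass_eq_image_Pow)

lemma activated_characteristic_iff: "activated (\<lambda>i. i \<in> j) j' \<longleftrightarrow> j' \<subseteq> j"
  by (auto simp: activated_def)

lemma indic_characteristic_iff:
  assumes antichain: "\<forall>j \<in> J. \<forall>j' \<in> J. j' \<subseteq> j \<longrightarrow> j' = j"
    and "F \<subseteq> J" and "j \<in> J"
  shows "indic F (\<lambda>i. i \<in> j) \<longleftrightarrow> j \<in> F"
  using assms by (auto simp: indic_def activated_characteristic_iff)

lemma shatters_hclass_characteristic_functions: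
  assumes antichain: "\<forall>j \<in> J. \<forall>j' \<in> J. j' \<subseteq> j \<longrightarrow> j' = j"
  shows "shatters (hclass J) ((\<lambda>j i. i \<in> j) ` J)"
  unfolding shatters_def
proof (intro allI impI)
  fix T assume "T \<subseteq> (\<lambda>j i. i \<in> j) ` J"
  define F where "F = {j \<in> J. (\<lambda>i. i \<in> j) \<in> T}"
  have "indic F \<in> hclass J"
    unfolding hclass_def F_def by blast
  moreover have "indic F x \<longleftrightarrow> x \<in> T" if "x \<in> (\<lambda>j i. i \<in> j) ` J" for x
  proof -
    from that obtain j where "j \<in> J" and x: "x = (\<lambda>i. i \<in> j)" by blast
    then have "indic F x \<longleftrightarrow> j \<in> F"
      using indic_characteristic_iff[OF antichain] F_def by auto
    with \<open>j \<in> J\<close> show ?thesis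
      unfolding F_def x by simp
  qed
  ultimately show "\<exists>h \<in> hclass J. \<forall>x \<in> (\<lambda>j i. i \<in> j) ` J. h x \<longleftrightarrow> x \<in> T"
    by blast
qed

lemma inj_characteristic_function: "inj (\<lambda>j i. i \<in> j)"
  by (rule injI) (simp add: fun_eq_iff set_eq_iff)

lemma VCdim_eqI:
  assumes "S \<subseteq> X" and "finite S" and "shatters H S" and "card S = k"
    and "\<And>S. S \<subseteq> X \<Longrightarrow> finite S \<Longrightarrow> shatters H S \<Longrightarrow> card S \<le> k"
  shows "VCdim X H = k"
proof -
  let ?M = "{card S | S. S \<subseteq> X \<and> finite S \<and> shatters H S}"
  have "?M \<subseteq> {..k}"
    using assms(5) by auto
  then have "finite ?M"
    by (rule finite_subset) simp
  moreover have "k \<in> ?M"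
    using assms(1-4) by blast
  ultimately show ?thesis
    unfolding VCdim_def using assms(5) by (intro Max_eqI) auto
qed

theorem proposition14:
  fixes I :: "'a set" and n :: nat and J :: "'a set set"
  assumes "finite I"
    and "1 \<le> n" and "n \<le> card I"
    and "\<forall>j \<in> J. j \<subseteq> I \<and> card j = n"
  shows "VCdim (samples I) (hclass J) = card J"
proof (rule VCdim_eqI)
  have "J \<subseteq> Pow I"
    using assms(4) by blast
  then have "finite J"
    using assms(1) by (simp add: finite_subset)
  have "\<forall>j \<in> J. \<forall>j' \<in> J. j' \<subseteq> j \<longrightarrow> j' = j"
    by (metis assms(1,4) card_subset_eq finite_subset)
  then show "shatters (hclass J) ((\<lambda>j i. i \<in> j) ` J)"
    by (rule shatters_hclass_characteristic_functions)
  show "(\<lambda>j i. i \<in> j) ` J \<subseteq> samples I"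
    using \<open>J \<subseteq> Pow I\<close> by (auto simp: samples_def)
  show "finite ((\<lambda>j i. i \<in> j) ` J)"
    using \<open>finite J\<close> by simp
  show "card ((\<lambda>j i. i \<in> j) ` J) = card J"
    by (rule card_image, rule inj_on_subset[OF inj_characteristic_function]) simp
  fix S :: "('a \<Rightarrow> bool) set"
  assume "finite S" and "shatters (hclass J) S"
  then have "2 ^ card S \<le> (2::nat) ^ card J"
    using shatters_imp_two_power_card_le card_hclass_le finite_hclass \<open>finite J\<close>
    by (meson order_trans)
  then show "card S \<le> card J"
    by simp
qed

end
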